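(* Let $\gamma$ be a meromorphic family in $\mathrm{GL}_n(\mathbb C)$ with exponents $m_1\ge\dots\ge m_n$, let $k_1>\dots>k_\tau$ be the distinct values among the $m_i$, and let $\alpha_j$ be the number of indices $i$ with $m_i=k_j$. Then (a) for each $j$ the limit $P_j:=\lim_{z\to0}\mathrm{graph}(z^{k_j}\gamma(z))$ exists in the Grassmannian $\mathrm{Gr}_n$ of $n$-dimensional subspaces of $\mathbb C^n\oplus\mathbb C^n$, and $\mathrm{rk}\,P_j=\alpha_j$; (b) the collection $\mathcal P^\gamma=(P_1,\dots,P_\tau)$ is a hinge.
   Context: A meromorphic family is a map $\gamma$ from a punctured disc $0<|z|<\varepsilon$ to $\mathrm{GL}_n(\mathbb C)$ whose matrix entries are holomorphic there with poles or removable singularities at $0$. Every such $\gamma$ can be written $\gamma(z)=a(z)\,\mathrm{diag}(z^{-m_1},\dots,z^{-m_n})\,b(z)$ with $a,b$ holomorphic near $0$ with $a(0),b(0)$ invertible and integers $m_1\ge\dots\ge m_n$ uniquely determined by $\gamma$; these are the exponents. For a subspace (linear relation) $P\subset V\oplus V$, $V=\mathbb C^n$: $\mathrm{Ker}\,P=\{v:v\oplus0\in P\}$, $\mathrm{Dom}\,P$ and $\mathrm{Im}\,P$ are the projections of $P$ to the first and second summands, $\mathrm{Indef}\,P=\{w:0\oplus w\in P\}$, $\mathrm{rk}\,P=\dim\mathrm{Dom}\,P-\dim\mathrm{Ker}\,P$. A hinge is a sequence $(P_1,\dots,P_k)$ of $n$-dimensional subspaces of $V\oplus V$ such that $\mathrm{Ker}\,P_j=\mathrm{Dom}\,P_{j+1}$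 and $\mathrm{Im}\,P_j=\mathrm{Indef}\,P_{j+1}$ for $1\le j\le k-1$, $\mathrm{Dom}\,P_1=V$, $\mathrm{Im}\,P_k=V$, and $\mathrm{rk}\,P_j>0$ for all $j$. *)

theory Defs
  imports "HOL-Complex_Analysis.Complex_Analysis"
begin

type_synonym 'n cmat = "complex ^'n ^'n"
type_synonym 'n rel = "((complex ^'n) \<times> (complex ^'n)) set"

definition pscale :: "complex \<Rightarrow> (complex ^'n) \<times> (complex ^'n) \<Rightarrow> (complex ^'n) \<times> (complex ^'n)" where
  "pscale c p = (c *s fst p, c *s snd p)"

definition ndim_subspace :: "'n::finite rel \<Rightarrow> bool" where
  "ndim_subspace P \<longleftrightarrow> module.subspace pscale P \<and> vector_space.dim pscale P = CARD('n)"

definition Ker :: "'n::finite rel \<Rightarrow> (complex ^'n) set" where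
  "Ker P = {v. (v, 0) \<in> P}"
definition Dom :: "'n::finite rel \<Rightarrow> (complex ^'n) set" where
  "Dom P = fst ` P"
definition Im :: "'n::finite rel \<Rightarrow> (complex ^'n) set" where
  "Im P = snd ` P"
definition Indef :: "'n::finite rel \<Rightarrow> (complex ^'n) set" where
  "Indef P = {w. (0, w) \<in> P}"
definition rk :: "'n::finite rel \<Rightarrow> int" where
  "rk P = int (vec.dim (Dom P)) - int (vec.dim (Ker P))"

text \<open>A hinge (P_0,...,P_{k-1}) (0-based indexing).\<close>
definition hinge :: "nat \<Rightarrow> (nat \<Rightarrow> 'n::finite rel) \<Rightarrow> bool" where
  "hinge k P \<longleftrightarrow> k \<ge> 1
     \<and> (\<forall>j<k. ndim_subspace (P j))
     \<and> (\<forall>j. j + 1 < k \<longrightarrow> Ker (P j) = Dom (P (j+1)) \<and> Im (P j) = Indef (P (j+1)))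
     \<and> Dom (P 0) = UNIV
     \<and> Im (P (k - 1)) = UNIV
     \<and> (\<forall>j<k. rk (P j) > 0)"

definition frame_span :: "'n::finite cmat \<Rightarrow> 'n cmat \<Rightarrow> 'n rel" where
  "frame_span A B = range (\<lambda>v. (A *v v, B *v v))"
definition full_rank_frame :: "'n::finite cmat \<Rightarrow> 'n cmat \<Rightarrow> bool" where
  "full_rank_frame A B \<longleftrightarrow> inj (\<lambda>v. (A *v v, B *v v))"

text \<open>Convergence in the Grassmannian Gr_n (quotient of full-rank frames by GL_n):
  L(z) \<longrightarrow> P as z \<longrightarrow> 0 iff L(z) admits full-rank frames converging to a full-rank frame of P.\<close>
definition grass_tendsto_0 :: "(complex \<Rightarrow> 'n::finite rel) \<Rightarrow> 'n rel \<Rightarrow> bool" where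
  "grass_tendsto_0 L P \<longleftrightarrow> (\<exists>A B A0 B0.
      (\<forall>\<^sub>F z in at 0. full_rank_frame (A z) (B z) \<and> L z = frame_span (A z) (B z))
      \<and> (A \<longlongrightarrow> A0) (at 0) \<and> (B \<longlongrightarrow> B0) (at 0)
      \<and> full_rank_frame A0 B0 \<and> P = frame_span A0 B0)"

definition mscale :: "complex \<Rightarrow> 'n::finite cmat \<Rightarrow> 'n cmat" where
  "mscale c M = (\<chi> i j. c * M $ i $ j)"

definition graph :: "'n::finite cmat \<Rightarrow> 'n rel" where
  "graph M = {(v, M *v v) | v. True}"

definition diag :: "('n::finite \<Rightarrow> complex) \<Rightarrow> 'n cmat" where
  "diag d = (\<chi> i j. if i = j then d i else 0)"

definition meromorphic_family :: "(complex \<Rightarrow> 'n::finite cmat) \<Rightarrow> bool" where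
  "meromorphic_family \<gamma> \<longleftrightarrow> (\<exists>\<epsilon>>0.
      (\<forall>z. 0 < norm z \<and> norm z < \<epsilon> \<longrightarrow> invertible (\<gamma> z))
      \<and> (\<forall>i j. (\<lambda>z. \<gamma> z $ i $ j) holomorphic_on (ball 0 \<epsilon> - {0})
               \<and> not_essential (\<lambda>z. \<gamma> z $ i $ j) 0))"

text \<open>e gives the exponents of \<gamma> (as a family indexed by 'n; the ordered list m_1 \<ge> ... \<ge> m_n
  is its decreasing rearrangement): \<gamma>(z) = a(z) diag(z^{-e i}) b(z) near 0.\<close>
definition has_exponents :: "(complex \<Rightarrow> 'n::finite cmat) \<Rightarrow> ('n \<Rightarrow> int) \<Rightarrow> bool" where
  "has_exponents \<gamma> e \<longleftrightarrow> (\<exists>r>0. \<exists>a b.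
      (\<forall>i j. (\<lambda>z. a z $ i $ j) holomorphic_on ball 0 r \<and> (\<lambda>z. b z $ i $ j) holomorphic_on ball 0 r)
      \<and> invertible (a 0) \<and> invertible (b 0)
      \<and> (\<forall>z. 0 < norm z \<and> norm z < r \<longrightarrow>
             \<gamma> z = a z ** diag (\<lambda>i. z powi (- e i)) ** b z))"

end

theory Submission
  imports Defs
begin

text \<open>
  Write \<open>\<gamma>(z) = a(z) D(z) b(z)\<close> with \<open>D(z) = diag(z^-e\<^sub>i)\<close> and fix an integer \<open>k\<close>.
  Since \<open>z^k D(z) S(z) = T(z)\<close> for \<open>S(z) = diag(z^max(e\<^sub>i - k, 0))\<close> and
  \<open>T(z) = diag(z^max(k - e\<^sub>i, 0))\<close>, the graph of \<open>z^k \<gamma>(z)\<close> is, for \<open>z \<noteq> 0\<close>, the column span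
  of the full-rank frame \<open>[b(z)^-1 S(z); a(z) T(z)]\<close>. As \<open>z \<rightarrow> 0\<close> these frames converge to
  \<open>[X E{e \<le> k}; Y E{e \<ge> k}]\<close>, where \<open>X = b(0)^-1\<close>, \<open>Y = a(0)\<close> and \<open>E{..}\<close> is the coordinate
  projection onto the given set of indices; the limit still has full rank because every index
  lies in \<open>{e \<le> k}\<close> or in \<open>{e \<ge> k}\<close>. Domain, kernel, image and indefiniteness of its span are
  the images under \<open>X\<close> resp. \<open>Y\<close> of the coordinate subspaces for \<open>e \<le> k\<close>, \<open>e < k\<close>, \<open>e \<ge> k\<close>,
  \<open>e > k\<close>, so its rank is \<open>#{e = k}\<close>, and for consecutive values \<open>k\<^sub>j > k\<^sub>j\<^sub>+\<^sub>1\<close> of \<open>e\<close> one has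
  \<open>{e < k\<^sub>j} = {e \<le> k\<^sub>j\<^sub>+\<^sub>1}\<close> and \<open>{e \<ge> k\<^sub>j} = {e > k\<^sub>j\<^sub>+\<^sub>1}\<close>: these are the hinge conditions.
\<close>

lemma
  fixes A :: "'a::semiring_1^'n^'n"
  assumes "invertible A"
  shows matrix_inv_right: "A ** matrix_inv A = mat 1"
    and matrix_inv_left: "matrix_inv A ** A = mat 1"
proof -
  have "\<exists>A'. A ** A' = mat 1 \<and> A' ** A = mat 1"
    using assms unfolding invertible_def by blast
  then have "A ** matrix_inv A = mat 1 \<and> matrix_inv A ** A = mat 1"
    unfolding matrix_inv_def by (rule someI_ex)
  then show "A ** matrix_inv A = mat 1" "matrix_inv A ** A = mat 1" by auto
qed

lemma invertible_matrix_inv: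
  fixes A :: "'a::semiring_1^'n^'n"
  assumes "invertible A"
  shows "invertible (matrix_inv A)"
  using matrix_inv_left[OF assms] matrix_inv_right[OF assms] unfolding invertible_def by blast

lemma matrix_inv_mult_vec_cancel:
  fixes A :: "'a::comm_semiring_1^'n^'n"
  assumes "invertible A"
  shows "matrix_inv A *v (A *v v) = v" and "A *v (matrix_inv A *v v) = v"
  by (simp_all add: matrix_vector_mul_assoc matrix_inv_left[OF assms] matrix_inv_right[OF assms])

lemma surj_matrix_vector_mult:
  fixes A :: "'a::field^'n^'n"
  assumes "invertible A"
  shows "surj ((*v) A)"
  using assms invertible_eq_bij bij_is_surj by blast

lemma dim_image_invertible:
  fixes X :: "'a::field^'n::finite^'n"
  assumes "invertible X"
  shows "vec.dim ((*v) X ` S) = vec.dim S"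
  using inj_matrix_vector_mult[OF assms]
  by (intro vec.dim_image_eq matrix_vector_mul_linear_gen) (rule inj_on_subset, auto)

lemma tendsto_matrix_mult:
  fixes A B :: "'b \<Rightarrow> 'a::real_normed_field^'n^'n"
  assumes "(A \<longlongrightarrow> A0) F" and "(B \<longlongrightarrow> B0) F"
  shows "((\<lambda>x. A x ** B x) \<longlongrightarrow> A0 ** B0) F"
  unfolding matrix_matrix_mult_def by (intro tendsto_intros tendsto_vec_nth assms)

lemma tendsto_det:
  fixes A :: "'b \<Rightarrow> 'a::real_normed_field^'n^'n"
  assumes "(A \<longlongrightarrow> A0) F"
  shows "((\<lambda>x. det (A x)) \<longlongrightarrow> det A0) F"
  unfolding det_def by (intro tendsto_intros tendsto_vec_nth assms)

lemma eventually_invertible: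
  fixes A :: "'b \<Rightarrow> 'a::real_normed_field^'n^'n"
  assumes "(A \<longlongrightarrow> A0) F" and "invertible A0"
  shows "\<forall>\<^sub>F x in F. invertible (A x)"
  using tendsto_imp_eventually_ne[OF tendsto_det[OF assms(1)]] assms(2)
  by (simp add: invertible_det_nz)

lemma matrix_inv_nth_cramer:
  fixes A :: "'a::field^'n^'n"
  assumes "det A \<noteq> 0"
  shows "matrix_inv A $ i $ k = det (\<chi> r c. if c = i then axis k 1 $ r else A $ r $ c) / det A"
proof -
  have "A *v (matrix_inv A *v axis k 1) = axis k 1"
    using assms invertible_det_nz matrix_inv_mult_vec_cancel(2) by blast
  then have "matrix_inv A *v axis k 1
      = (\<chi> j. det (\<chi> r c. if c = j then axis k 1 $ r else A $ r $ c) / det A)"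
    using cramer[OF assms] by blast
  moreover have "(matrix_inv A *v axis k 1) $ i = matrix_inv A $ i $ k"
    by (simp add: matrix_vector_mult_def axis_def if_distrib cong: if_cong)
  ultimately show ?thesis by simp
qed

lemma tendsto_matrix_inv:
  fixes A :: "'b \<Rightarrow> 'a::real_normed_field^'n^'n"
  assumes "(A \<longlongrightarrow> A0) F" and "invertible A0"
  shows "((\<lambda>x. matrix_inv (A x)) \<longlongrightarrow> matrix_inv A0) F"
proof (intro vec_tendstoI)
  fix i k
  have det0: "det A0 \<noteq> 0" using assms(2) invertible_det_nz by blast
  have "\<forall>\<^sub>F x in F. det (\<chi> r c. if c = i then axis k 1 $ r else A x $ r $ c) / det (A x)
      = matrix_inv (A x) $ i $ k"
    using eventually_invertible[OF assms]
    by eventually_elim (simp add: invertible_det_nz matrix_inv_nth_cramer)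
  moreover have "((\<lambda>x. det (\<chi> r c. if c = i then axis k 1 $ r else A x $ r $ c) / det (A x))
      \<longlongrightarrow> det (\<chi> r c. if c = i then axis k 1 $ r else A0 $ r $ c) / det A0) F"
    using tendsto_vec_nth[OF tendsto_vec_nth[OF assms(1)]]
    by (intro tendsto_intros tendsto_det det0 assms(1)) (simp split: if_split)
  ultimately show "((\<lambda>x. matrix_inv (A x) $ i $ k) \<longlongrightarrow> matrix_inv A0 $ i $ k) F"
    unfolding matrix_inv_nth_cramer[OF det0] by (rule Lim_transform_eventually[rotated])
qed

lemma tendsto_holomorphic_entries:
  fixes A :: "complex \<Rightarrow> complex^'n^'m"
  assumes "\<And>i j. (\<lambda>z. A z $ i $ j) holomorphic_on ball c r" and "0 < r"
  shows "(A \<longlongrightarrow> A c) (at c)"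
proof (intro vec_tendstoI)
  fix i j
  have "isCont (\<lambda>z. A z $ i $ j) c"
    using holomorphic_on_imp_continuous_on[OF assms(1)] assms(2)
    by (intro continuous_on_interior) auto
  then show "((\<lambda>z. A z $ i $ j) \<longlongrightarrow> A c $ i $ j) (at c)"
    by (rule isContD)
qed

lemma diag_mult_vec: "diag d *v v = (\<chi> i. d i * v $ i)"
proof -
  have "(\<Sum>j\<in>UNIV. (if i = j then d i else 0) * v $ j) = d i * v $ i" for i
    by (simp add: if_distrib[of "\<lambda>x. x * _"] cong: if_cong)
  then show ?thesis by (simp add: diag_def matrix_vector_mult_def vec_eq_iff)
qed

lemma invertible_diag:
  assumes "\<And>i. d i \<noteq> 0"
  shows "invertible (diag d)"
proof -
  have "diag d ** diag (\<lambda>i. 1 / d i) = mat 1" "diag (\<lambda>i. 1 / d i) ** diag d = mat 1"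
    using assms by (simp_all add: matrix_eq diag_mult_vec matrix_vector_mul_assoc[symmetric])
  then show ?thesis unfolding invertible_def by blast
qed

lemma tendsto_diag:
  assumes "\<And>i. ((\<lambda>x. d x i) \<longlongrightarrow> d0 i) F"
  shows "((\<lambda>x. diag (d x)) \<longlongrightarrow> diag d0) F"
  unfolding diag_def by (intro vec_tendstoI) (simp add: assms)

lemma mscale_mult_vec: "mscale c M *v v = c *s (M *v v)"
  by (simp add: mscale_def matrix_vector_mult_def vec_eq_iff sum_distrib_left mult.assoc)

lemma tendsto_power_int_nonneg:
  fixes f :: "'b \<Rightarrow> 'a::real_normed_div_algebra"
  assumes "(f \<longlongrightarrow> a) F" and "0 \<le> n"
  shows "((\<lambda>x. f x powi n) \<longlongrightarrow> a powi n) F"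
proof -
  have "((\<lambda>x. f x ^ nat n) \<longlongrightarrow> a ^ nat n) F" by (intro tendsto_intros assms(1))
  moreover have "y powi n = y ^ nat n" for y :: 'a
    using assms(2) by (simp add: power_int_def)
  ultimately show ?thesis by simp
qed

lemma power_int_max_shift:
  fixes z :: "'a::division_ring"
  assumes "z \<noteq> 0"
  shows "z powi k * z powi (- m) * z powi max (m - k) 0 = z powi max (k - m) 0"
proof -
  have "k + - m + max (m - k) 0 = max (k - m) 0" by linarith
  then show ?thesis using assms by (simp flip: power_int_add)
qed

section \<open>Coordinate subspaces\<close>

definition coord_subspace :: "('n \<Rightarrow> bool) \<Rightarrow> ('a::zero^'n) set" where
  "coord_subspace p = {u. \<forall>i. \<not> p i \<longrightarrow> u $ i = 0}"

definition coord_proj :: "('n::finite \<Rightarrow> bool) \<Rightarrow> 'n cmat" where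
  "coord_proj p = diag (\<lambda>i. if p i then 1 else 0)"

lemma coord_proj_mult_vec: "coord_proj p *v u = (\<chi> i. if p i then u $ i else 0)"
  by (simp add: coord_proj_def diag_mult_vec vec_eq_iff)

lemma coord_subspace_all: "(\<And>i. p i) \<Longrightarrow> coord_subspace p = UNIV"
  by (simp add: coord_subspace_def)

lemma range_coord_proj:
  fixes p :: "'n::finite \<Rightarrow> bool"
  shows "range ((*v) (coord_proj p)) = coord_subspace p"
proof (intro equalityI subsetI)
  fix u :: "complex^'n" assume "u \<in> coord_subspace p"
  then have "u = coord_proj p *v u"
    by (simp add: coord_subspace_def coord_proj_mult_vec vec_eq_iff)
  then show "u \<in> range ((*v) (coord_proj p))" by blast
qed (auto simp: coord_subspace_def coord_proj_mult_vec)

lemma coord_proj_image_kernel: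
  fixes p q :: "'n::finite \<Rightarrow> bool"
  shows "{coord_proj p *v u |u. coord_proj q *v u = 0} = coord_subspace (\<lambda>i. p i \<and> \<not> q i)"
proof (intro equalityI subsetI)
  fix u :: "complex^'n" assume u: "u \<in> coord_subspace (\<lambda>i. p i \<and> \<not> q i)"
  then have "u = coord_proj p *v u" and "coord_proj q *v u = 0"
    by (auto simp: coord_subspace_def coord_proj_mult_vec vec_eq_iff)
  then show "u \<in> {coord_proj p *v u |u. coord_proj q *v u = 0}" by blast
qed (auto simp: coord_subspace_def coord_proj_mult_vec vec_eq_iff, metis)

lemma dim_coord_subspace: "vec.dim (coord_subspace p :: ('a::field^'n::finite) set) = card {i. p i}"
proof -
  define B where "B = (\<lambda>i. axis i (1::'a)) ` {i. p i}"
  have indep: "vec.independent B"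
    by (rule vec.independent_mono[OF independent_cart_basis]) (auto simp: B_def cart_basis_def)
  have span: "coord_subspace p = vec.span B"
  proof (intro equalityI subsetI)
    fix u :: "'a^'n" assume u: "u \<in> coord_subspace p"
    have "u = (\<Sum>i\<in>{i. p i}. u $ i *s axis i 1)"
      using u by (auto simp: coord_subspace_def vec_eq_iff sum_component axis_def if_distrib cong: if_cong)
    also have "\<dots> \<in> vec.span B"
      by (intro vec.span_sum vec.span_scale vec.span_base) (auto simp: B_def)
    finally show "u \<in> vec.span B" .
  next
    have "vec.subspace (coord_subspace p :: ('a^'n) set)"
      by (auto simp: vec.subspace_def coord_subspace_def)
    moreover have "B \<subseteq> coord_subspace p" by (auto simp: B_def coord_subspace_def axis_def)
    ultimately show "u \<in> coord_subspace p" if "u \<in> vec.span B" for u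
      using vec.span_minimal that by blast
  qed
  have "vec.dim (coord_subspace p :: ('a^'n) set) = card B"
    unfolding span vec.dim_span by (rule vec.dim_eq_card_independent[OF indep])
  also have "card B = card {i. p i}"
    unfolding B_def by (rule card_image) (auto simp: inj_on_def axis_eq_axis)
  finally show ?thesis .
qed

section \<open>Spans of frames\<close>

lemma vector_space_pscale: "vector_space (pscale :: complex \<Rightarrow> (complex^'n) \<times> (complex^'n) \<Rightarrow> _)"
  unfolding vector_space_def module_def pscale_def
  by (auto simp: algebra_simps vec.scale_right_distrib vec.scale_left_distrib)

lemma ndim_subspace_frame_span:
  fixes A B :: "'n::finite cmat"
  assumes "full_rank_frame A B"
  shows "ndim_subspace (frame_span A B)"
proof -
  interpret V: vector_space "pscale :: complex \<Rightarrow> (complex^'n) \<times> (complex^'n) \<Rightarrow> _"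
    by (rule vector_space_pscale)
  interpret VV: finite_dimensional_vector_space_pair_1 "(*s)" cart_basis
    "pscale :: complex \<Rightarrow> (complex^'n) \<times> (complex^'n) \<Rightarrow> _"
    by unfold_locales
  define f where "f = (\<lambda>v. (A *v v, B *v v))"
  have lin: "Vector_Spaces.linear (*s) pscale f"
    unfolding Vector_Spaces.linear_def module_hom_iff
    by (auto simp: f_def pscale_def vector_space_pscale vec.vector_space_axioms
        matrix_vector_right_distrib vec.scale V.module_axioms vec.module_axioms)
  have "V.subspace (frame_span A B)"
    unfolding frame_span_def f_def[symmetric]
    using VV.linear_subspace_image[OF lin vec.subspace_UNIV] .
  moreover have "V.dim (frame_span A B) = vec.dim (UNIV :: (complex^'n) set)"
    unfolding frame_span_def f_def[symmetric]
    using assms by (intro VV.dim_image_eq[OF lin]) (simp add: full_rank_frame_def f_def)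
  ultimately show ?thesis
    by (simp add: ndim_subspace_def vec.dim_UNIV card_cart_basis)
qed

lemma full_rank_frame_if_inj: "inj ((*v) A) \<Longrightarrow> full_rank_frame A B"
  unfolding full_rank_frame_def inj_def by blast

lemma graph_eq_frame_span:
  assumes "surj ((*v) S)" and "\<And>w. M *v (S *v w) = T *v w"
  shows "graph M = frame_span S T"
proof (intro equalityI subsetI)
  fix x assume "x \<in> graph M"
  then obtain v where x: "x = (v, M *v v)" by (auto simp: graph_def)
  obtain w where "v = S *v w" using assms(1) by (metis surjD)
  then show "x \<in> frame_span S T" by (auto simp: x frame_span_def assms(2))
next
  fix x assume "x \<in> frame_span S T"
  then obtain w where "x = (S *v w, T *v w)" by (auto simp: frame_span_def)
  then show "x \<in> graph M" by (simp add: graph_def flip: assms(2))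
qed

lemma Dom_swap: "Dom (prod.swap ` P) = Im P"
  by (simp add: Dom_def Im_def image_image)

lemma Ker_swap: "Ker (prod.swap ` P) = Indef P"
  by (simp add: Ker_def Indef_def)

lemma frame_span_swap: "prod.swap ` frame_span A B = frame_span B A"
  by (auto simp: frame_span_def)

definition coord_frame_span :: "'n::finite cmat \<Rightarrow> 'n cmat \<Rightarrow> ('n \<Rightarrow> bool) \<Rightarrow> ('n \<Rightarrow> bool) \<Rightarrow> 'n rel"
  where "coord_frame_span X Y p q = frame_span (X ** coord_proj p) (Y ** coord_proj q)"

lemma coord_frame_span_swap: "prod.swap ` coord_frame_span X Y p q = coord_frame_span Y X q p"
  by (simp add: coord_frame_span_def frame_span_swap)

lemma mem_coord_frame_span:
  "(v, w) \<in> coord_frame_span X Y p q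
    \<longleftrightarrow> (\<exists>u. v = X *v (coord_proj p *v u) \<and> w = Y *v (coord_proj q *v u))"
  by (auto simp: coord_frame_span_def frame_span_def matrix_vector_mul_assoc)

lemma Dom_coord_frame_span: "Dom (coord_frame_span X Y p q) = (*v) X ` coord_subspace p"
proof -
  have "Dom (coord_frame_span X Y p q) = (*v) X ` range ((*v) (coord_proj p))"
    by (auto simp: Dom_def coord_frame_span_def frame_span_def matrix_vector_mul_assoc image_iff)
  then show ?thesis by (simp only: range_coord_proj)
qed

lemma Im_coord_frame_span: "Im (coord_frame_span X Y p q) = (*v) Y ` coord_subspace q"
  by (metis Dom_swap coord_frame_span_swap Dom_coord_frame_span)

lemma Ker_coord_frame_span:
  assumes "invertible Y"
  shows "Ker (coord_frame_span X Y p q) = (*v) X ` coord_subspace (\<lambda>i. p i \<and> \<not> q i)"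
proof -
  have "Y *v (coord_proj q *v u) = 0 \<longleftrightarrow> coord_proj q *v u = 0" for u
    using inj_matrix_vector_mult[OF assms] by (metis injD matrix_vector_mult_0_right)
  then have "Ker (coord_frame_span X Y p q) = (*v) X ` {coord_proj p *v u |u. coord_proj q *v u = 0}"
    by (auto simp: Ker_def mem_coord_frame_span)
  then show ?thesis by (simp only: coord_proj_image_kernel)
qed

lemma Indef_coord_frame_span:
  assumes "invertible X"
  shows "Indef (coord_frame_span X Y p q) = (*v) Y ` coord_subspace (\<lambda>i. q i \<and> \<not> p i)"
  by (metis Ker_swap coord_frame_span_swap Ker_coord_frame_span[OF assms])

lemma rk_coord_frame_span:
  assumes "invertible X" and "invertible Y"
  shows "rk (coord_frame_span X Y p q) = int (card {i. p i \<and> q i})"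
proof -
  have "{i. p i} = {i. p i \<and> \<not> q i} \<union> {i. p i \<and> q i}" by auto
  then have "card {i. p i} = card {i. p i \<and> \<not> q i} + card {i. p i \<and> q i}"
    by (simp add: card_Un_disjoint disjoint_iff)
  then show ?thesis
    by (simp add: rk_def Dom_coord_frame_span Ker_coord_frame_span[OF assms(2)]
        dim_image_invertible[OF assms(1)] dim_coord_subspace)
qed

lemma rk_coord_frame_span_level:
  fixes e :: "'n::finite \<Rightarrow> int"
  assumes "invertible X" and "invertible Y"
  shows "rk (coord_frame_span X Y (\<lambda>i. e i \<le> k) (\<lambda>i. k \<le> e i)) = int (card {i. e i = k})"
proof -
  have "{i. e i \<le> k \<and> k \<le> e i} = {i. e i = k}" by auto
  then show ?thesis by (simp add: rk_coord_frame_span[OF assms])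
qed

lemma full_rank_coord_frame:
  assumes "invertible X" and "invertible Y" and "\<And>i. p i \<or> q i"
  shows "full_rank_frame (X ** coord_proj p) (Y ** coord_proj q)"
  unfolding full_rank_frame_def
proof (rule injI)
  fix v w
  assume "((X ** coord_proj p) *v v, (Y ** coord_proj q) *v v) = ((X ** coord_proj p) *v w, (Y ** coord_proj q) *v w)"
  then have "coord_proj p *v v = coord_proj p *v w" and "coord_proj q *v v = coord_proj q *v w"
    using inj_matrix_vector_mult[OF assms(1)] inj_matrix_vector_mult[OF assms(2)]
    by (auto simp flip: matrix_vector_mul_assoc dest: injD)
  then have p_eq: "(coord_proj p *v v) $ i = (coord_proj p *v w) $ i"
    and q_eq: "(coord_proj q *v v) $ i = (coord_proj q *v w) $ i" for i
    by simp_all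
  have "v $ i = w $ i" for i
    using assms(3)[of i] p_eq[of i] q_eq[of i] unfolding coord_proj_mult_vec by (auto split: if_splits)
  then show "v = w" by (simp add: vec_eq_iff)
qed

section \<open>Limits of the rescaled graphs\<close>

lemma graph_scaled_eq_frame_span:
  fixes z :: complex and k :: int and e :: "'n::finite \<Rightarrow> int" and A B :: "'n cmat"
  assumes "z \<noteq> 0" and "invertible B"
  defines "S \<equiv> matrix_inv B ** diag (\<lambda>i. z powi max (e i - k) 0)"
    and "T \<equiv> A ** diag (\<lambda>i. z powi max (k - e i) 0)"
  shows "graph (mscale (z powi k) (A ** diag (\<lambda>i. z powi (- e i)) ** B)) = frame_span S T"
    and "full_rank_frame S T"
proof -
  have "invertible S"
    unfolding S_def using assms(1)
    by (intro invertible_mult invertible_matrix_inv assms(2) invertible_diag) simp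
  then show "full_rank_frame S T"
    by (intro full_rank_frame_if_inj inj_matrix_vector_mult)
  have "z powi k *s (diag (\<lambda>i. z powi (- e i)) *v (diag (\<lambda>i. z powi max (e i - k) 0) *v w))
      = diag (\<lambda>i. z powi max (k - e i) 0) *v w" for w
    using power_int_max_shift[OF assms(1), of k]
    by (simp add: diag_mult_vec vec_eq_iff mult.assoc[symmetric])
  then have "mscale (z powi k) (A ** diag (\<lambda>i. z powi (- e i)) ** B) *v (S *v w) = T *v w" for w
    by (simp add: S_def T_def mscale_mult_vec matrix_inv_mult_vec_cancel[OF assms(2)]
        flip: vector_scalar_commute matrix_vector_mul_assoc)
  with \<open>invertible S\<close> show "graph (mscale (z powi k) (A ** diag (\<lambda>i. z powi (- e i)) ** B)) = frame_span S T"
    by (intro graph_eq_frame_span surj_matrix_vector_mult)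
qed

lemma grass_tendsto_graph_scaled:
  fixes \<gamma> a b :: "complex \<Rightarrow> 'n::finite cmat" and e :: "'n \<Rightarrow> int" and k :: int
  assumes a: "(a \<longlongrightarrow> a0) (at 0)" and b: "(b \<longlongrightarrow> b0) (at 0)"
    and "invertible a0" and "invertible b0"
    and factor: "\<forall>\<^sub>F z in at 0. \<gamma> z = a z ** diag (\<lambda>i. z powi (- e i)) ** b z"
  shows "grass_tendsto_0 (\<lambda>z. graph (mscale (z powi k) (\<gamma> z)))
    (coord_frame_span (matrix_inv b0) a0 (\<lambda>i. e i \<le> k) (\<lambda>i. k \<le> e i))"
proof -
  define s where "s z = diag (\<lambda>i. z powi max (e i - k) 0)" for z :: complex
  define t where "t z = diag (\<lambda>i. z powi max (k - e i) 0)" for z :: complex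
  \<comment> \<open>\<open>0 powi 0 = 1\<close>, so the limits \<open>s 0\<close> and \<open>t 0\<close> are coordinate projections.\<close>
  have s0: "s 0 = coord_proj (\<lambda>i. e i \<le> k)" and t0: "t 0 = coord_proj (\<lambda>i. k \<le> e i)"
    by (auto simp: s_def t_def coord_proj_def power_int_0_left_if intro!: arg_cong[where f = diag])
  have lim_s: "(s \<longlongrightarrow> s 0) (at 0)" and lim_t: "(t \<longlongrightarrow> t 0) (at 0)"
    unfolding s_def t_def by (intro tendsto_diag tendsto_power_int_nonneg tendsto_ident_at; simp)+
  have lim_S: "((\<lambda>z. matrix_inv (b z) ** s z) \<longlongrightarrow> matrix_inv b0 ** s 0) (at 0)"
    and lim_T: "((\<lambda>z. a z ** t z) \<longlongrightarrow> a0 ** t 0) (at 0)"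
    by (intro tendsto_matrix_mult tendsto_matrix_inv a b lim_s lim_t \<open>invertible b0\<close>)+
  have "\<forall>\<^sub>F z in at 0. full_rank_frame (matrix_inv (b z) ** s z) (a z ** t z)
      \<and> graph (mscale (z powi k) (\<gamma> z)) = frame_span (matrix_inv (b z) ** s z) (a z ** t z)"
    using factor eventually_invertible[OF b \<open>invertible b0\<close>] eventually_neq_at_within[of 0]
  proof eventually_elim
    case (elim z)
    then show ?case
      using graph_scaled_eq_frame_span[where z = z and B = "b z" and A = "a z" and k = k and e = e]
      by (simp add: s_def t_def)
  qed
  moreover have "full_rank_frame (matrix_inv b0 ** s 0) (a0 ** t 0)"
    unfolding s0 t0
    by (intro full_rank_coord_frame invertible_matrix_inv \<open>invertible a0\<close> \<open>invertible b0\<close>) linarith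
  ultimately show ?thesis
    unfolding grass_tendsto_0_def coord_frame_span_def s0[symmetric] t0[symmetric]
    using lim_S lim_T
    by - (rule exI[of _ "\<lambda>z. matrix_inv (b z) ** s z"], rule exI[of _ "\<lambda>z. a z ** t z"], blast)
qed

lemma has_exponentsE:
  assumes "has_exponents \<gamma> e"
  obtains a b :: "complex \<Rightarrow> 'n::finite cmat"
  where "(a \<longlongrightarrow> a 0) (at 0)" and "(b \<longlongrightarrow> b 0) (at 0)" and "invertible (a 0)" and "invertible (b 0)"
    and "\<forall>\<^sub>F z in at 0. \<gamma> z = a z ** diag (\<lambda>i. z powi (- e i)) ** b z"
proof -
  obtain r and a b :: "complex \<Rightarrow> 'n cmat" where "r > 0"
    and hol: "\<forall>i j. (\<lambda>z. a z $ i $ j) holomorphic_on ball 0 r \<and> (\<lambda>z. b z $ i $ j) holomorphic_on ball 0 r"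
    and "invertible (a 0)" and "invertible (b 0)"
    and factor: "\<forall>z. 0 < norm z \<and> norm z < r \<longrightarrow> \<gamma> z = a z ** diag (\<lambda>i. z powi (- e i)) ** b z"
    using assms unfolding has_exponents_def by blast
  have "(a \<longlongrightarrow> a 0) (at 0)" and "(b \<longlongrightarrow> b 0) (at 0)"
    using hol \<open>r > 0\<close> by (auto intro!: tendsto_holomorphic_entries)
  moreover have "\<forall>\<^sub>F z in at 0. \<gamma> z = a z ** diag (\<lambda>i. z powi (- e i)) ** b z"
    unfolding eventually_at using \<open>r > 0\<close> factor by auto
  ultimately show ?thesis using that \<open>invertible (a 0)\<close> \<open>invertible (b 0)\<close> by blast
qed

section \<open>The hinge of the limits\<close>

lemma sorted_wrt_greater_nth_less_iff:
  fixes xs :: "'a::linorder list"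
  assumes "sorted_wrt (>) xs" and "m < length xs" and "n < length xs"
  shows "xs ! m < xs ! n \<longleftrightarrow> n < m"
  using sorted_wrt_nth_less[OF assms(1)] assms(2,3)
  by (metis less_asym linorder_neqE_nat)

lemma sorted_wrt_greater_consecutive:
  fixes xs :: "'a::linorder list"
  assumes "sorted_wrt (>) xs" and "x \<in> set xs" and "Suc j < length xs"
  shows "x < xs ! j \<longleftrightarrow> x \<le> xs ! Suc j"
proof -
  obtain m where m: "m < length xs" "x = xs ! m" using assms(2) by (auto simp: in_set_conv_nth)
  have "x < xs ! j \<longleftrightarrow> j < m"
    using m assms(3) by (simp add: sorted_wrt_greater_nth_less_iff[OF assms(1)])
  moreover have "x \<le> xs ! Suc j \<longleftrightarrow> \<not> m < Suc j"
    using m assms(3) by (simp add: not_less[symmetric] sorted_wrt_greater_nth_less_iff[OF assms(1)])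
  ultimately show ?thesis by linarith
qed

lemma sorted_wrt_greater_bounds:
  fixes xs :: "'a::linorder list"
  assumes "sorted_wrt (>) xs" and "x \<in> set xs"
  shows "x \<le> xs ! 0" and "xs ! (length xs - 1) \<le> x"
proof -
  obtain m where m: "m < length xs" "x = xs ! m" using assms(2) by (auto simp: in_set_conv_nth)
  have len: "0 < length xs" "length xs - 1 < length xs" using m(1) by auto
  have "\<not> xs ! 0 < xs ! m" and "\<not> xs ! m < xs ! (length xs - 1)"
    using sorted_wrt_greater_nth_less_iff[OF assms(1) len(1) m(1)]
      sorted_wrt_greater_nth_less_iff[OF assms(1) m(1) len(2)] m(1) by auto
  then show "x \<le> xs ! 0" and "xs ! (length xs - 1) \<le> x"
    using m(2) by simp_all
qed

lemma hinge_coord_frame_spans: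
  fixes X Y :: "'n::finite cmat" and e :: "'n \<Rightarrow> int" and ks :: "int list"
  assumes "invertible X" and "invertible Y"
    and ks: "sorted_wrt (>) ks" "set ks = range e"
  defines "P \<equiv> \<lambda>j. coord_frame_span X Y (\<lambda>i. e i \<le> ks ! j) (\<lambda>i. ks ! j \<le> e i)"
  shows "hinge (length ks) P"
  unfolding hinge_def
proof (intro conjI allI impI)
  have e_in: "e i \<in> set ks" for i using ks(2) by auto
  show "1 \<le> length ks"
    using e_in by (cases ks) auto
  show "ndim_subspace (P j)" for j
    unfolding P_def coord_frame_span_def
    by (intro ndim_subspace_frame_span full_rank_coord_frame assms(1,2)) linarith
  show "rk (P j) > 0" if "j < length ks" for j
  proof -
    have "{i. e i = ks ! j} \<noteq> {}"
      using nth_mem[OF that] ks(2) by (auto simp: image_iff)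
    then show ?thesis
      unfolding P_def rk_coord_frame_span_level[OF assms(1,2)] by (simp add: card_gt_0_iff)
  qed
  show "Dom (P 0) = UNIV"
    unfolding P_def Dom_coord_frame_span coord_subspace_all[OF sorted_wrt_greater_bounds(1)[OF ks(1) e_in]]
    using surj_matrix_vector_mult[OF assms(1)] .
  show "Im (P (length ks - 1)) = UNIV"
    unfolding P_def Im_coord_frame_span coord_subspace_all[OF sorted_wrt_greater_bounds(2)[OF ks(1) e_in]]
    using surj_matrix_vector_mult[OF assms(2)] .
  fix j assume j: "j + 1 < length ks"
  then have gap: "e i < ks ! j \<longleftrightarrow> e i \<le> ks ! Suc j" for i
    using sorted_wrt_greater_consecutive[OF ks(1) e_in] by simp
  have "e i \<le> ks ! j \<and> \<not> ks ! j \<le> e i \<longleftrightarrow> e i \<le> ks ! (j + 1)"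
    and "ks ! (j + 1) \<le> e i \<and> \<not> e i \<le> ks ! (j + 1) \<longleftrightarrow> ks ! j \<le> e i" for i
    using gap[of i] by auto
  then have "(\<lambda>i. e i \<le> ks ! j \<and> \<not> ks ! j \<le> e i) = (\<lambda>i. e i \<le> ks ! (j + 1))"
    and "(\<lambda>i. ks ! (j + 1) \<le> e i \<and> \<not> e i \<le> ks ! (j + 1)) = (\<lambda>i. ks ! j \<le> e i)"
    by simp_all
  then show "Ker (P j) = Dom (P (j + 1))" and "Im (P j) = Indef (P (j + 1))"
    unfolding P_def Ker_coord_frame_span[OF assms(2)] Dom_coord_frame_span
      Im_coord_frame_span Indef_coord_frame_span[OF assms(1)]
    by simp_all
qed

theorem proposition3p2:
  fixes \<gamma> :: "complex \<Rightarrow> complex ^'n::finite ^'n" and e :: "'n \<Rightarrow> int"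
  assumes "meromorphic_family \<gamma>" and "has_exponents \<gamma> e"
  defines "ks \<equiv> rev (sorted_list_of_set (range e))"
  shows "\<exists>P :: nat \<Rightarrow> 'n rel.
           (\<forall>j < length ks.
              grass_tendsto_0 (\<lambda>z. graph (mscale (z powi (ks ! j)) (\<gamma> z))) (P j)
              \<and> rk (P j) = int (card {i. e i = ks ! j}))
           \<and> hinge (length ks) P"
proof -
  obtain a b where lim_a: "(a \<longlongrightarrow> a 0) (at 0)" and lim_b: "(b \<longlongrightarrow> b 0) (at 0)"
    and "invertible (a 0)" and "invertible (b 0)"
    and factor: "\<forall>\<^sub>F z in at 0. \<gamma> z = a z ** diag (\<lambda>i. z powi (- e i)) ** b z"
    using has_exponentsE[OF assms(2)] by blast
  have ks: "sorted_wrt (>) ks" "set ks = range e"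
    by (simp_all add: ks_def sorted_wrt_rev strict_sorted_list_of_set)
  define P where "P j = coord_frame_span (matrix_inv (b 0)) (a 0) (\<lambda>i. e i \<le> ks ! j) (\<lambda>i. ks ! j \<le> e i)"
    for j
  have "grass_tendsto_0 (\<lambda>z. graph (mscale (z powi (ks ! j)) (\<gamma> z))) (P j)" for j
    unfolding P_def
    using grass_tendsto_graph_scaled[OF lim_a lim_b \<open>invertible (a 0)\<close> \<open>invertible (b 0)\<close> factor] .
  moreover have "rk (P j) = int (card {i. e i = ks ! j})" for j
    unfolding P_def
    by (intro rk_coord_frame_span_level invertible_matrix_inv \<open>invertible (a 0)\<close> \<open>invertible (b 0)\<close>)
  moreover have "hinge (length ks) P"
    unfolding P_def
    by (intro hinge_coord_frame_spans invertible_matrix_inv \<open>invertible (a 0)\<close> \<open>invertible (b 0)\<close> ks)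
  ultimately show ?thesis by blast
qed

end
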